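(* Let $\mathbf{x}$ be a feasible solution of $\textsc{Dir-MC-Rel}$. For each edge $e=(u,v)\in E$, let $a_1(u)\le a_2(u)$ be the two smallest values in the multiset $\{d_G(s_1,u),\dots,d_G(s_k,u)\}$, and define $I_1(e)=[a_1(u),a_1(u)+x_e)$ and $I_2(e)=[a_2(u),a_2(u)+x_e)$. For $\theta\in(0,1)$ let $C'(\theta)=\{e\in E:\theta\in I_1(e)\cup I_2(e)\}$. Then for every $\theta\in(0,1)$, $C'(\theta)\supseteq C(\theta)$ and $C'(\theta)$ is a directed multiway cut; and if $\theta$ is uniform on $(0,1)$ then $\Pr[e\in C'(\theta)]\le 2x_e$ for every $e\in E$, so $\mathbb{E}[w(C'(\theta))]\le 2\sum_e w_ex_e$.
   Context: $G=(V,E)$ is a directed graph with non-negative edge weights $w_e$ and distinct terminals $s_1,\dots,s_k$, $k\ge2$. A directed multiway cut is $E'\subseteq E$ such that $G-E'$ has no directed path from $s_i$ to $s_j$ for $i\neq j$; $w(E')=\sum_{e\in E'}w_e$. For $i\neq j$, $\mathcal{P}_{ij}$ is the set of directed paths from $s_i$ to $s_j$ in $G$. $\textsc{Dir-MC-Rel}$: minimize $\sum_e w_e x_e$ s.t. $\sum_{e\in p}x_e\ge1$ for all $p\in\mathcal{P}_{ij}$, $i\ne j$, and $x\ge0$. $d_G(a,b)$ is the shortest directed path length from $a$ to $b$ in $G$ with edge lengths $\mathbf{x}$ ($+\infty$ if none). Form $G^+$ by adding new vertices $t_1,\dots,t_k$ and edges $(t_i,s_j)$ for all $i\neq j$ with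 $x$-value $0$; $d$ denotes shortest-path distance in $G^+$ w.r.t. $\mathbf{x}$; $B(v,r)=\{u:d(v,u)\le r\}$; $\delta^+(A)$ is the set of edges of $G^+$ with tail in $A$ and head outside $A$; $C(\theta)=\bigcup_{i=1}^k\delta^+(B(t_i,\theta))$. *)

theory Defs
  imports "HOL-Analysis.Analysis"
begin

definition dpath :: "('a \<times> 'a) set \<Rightarrow> 'a list \<Rightarrow> bool" where
  "dpath E p \<longleftrightarrow> p \<noteq> [] \<and> distinct p \<and> (\<forall>i. Suc i < length p \<longrightarrow> (p ! i, p ! Suc i) \<in> E)"

definition path_edges :: "'a list \<Rightarrow> ('a \<times> 'a) list" where
  "path_edges p = zip p (tl p)"

definition path_len :: "('a \<times> 'a \<Rightarrow> real) \<Rightarrow> 'a list \<Rightarrow> real" where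
  "path_len x p = sum_list (map x (path_edges p))"

text \<open>Shortest directed path length from a to b w.r.t. edge lengths x (+\<infinity> if none).\<close>
definition dist_in :: "('a \<times> 'a) set \<Rightarrow> ('a \<times> 'a \<Rightarrow> real) \<Rightarrow> 'a \<Rightarrow> 'a \<Rightarrow> ereal" where
  "dist_in E x a b = Inf {ereal (path_len x p) | p. dpath E p \<and> hd p = a \<and> last p = b}"

definition dir_multiway_cut :: "('a \<times> 'a) set \<Rightarrow> (nat \<Rightarrow> 'a) \<Rightarrow> nat \<Rightarrow> ('a \<times> 'a) set \<Rightarrow> bool" where
  "dir_multiway_cut E s k E' \<longleftrightarrow> E' \<subseteq> E \<and>
     (\<forall>i\<in>{1..k}. \<forall>j\<in>{1..k}. i \<noteq> j \<longrightarrow>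
        \<not> (\<exists>p. dpath (E - E') p \<and> hd p = s i \<and> last p = s j))"

definition dir_mc_rel_feasible :: "('a \<times> 'a) set \<Rightarrow> (nat \<Rightarrow> 'a) \<Rightarrow> nat \<Rightarrow> ('a \<times> 'a \<Rightarrow> real) \<Rightarrow> bool" where
  "dir_mc_rel_feasible E s k x \<longleftrightarrow> (\<forall>e\<in>E. 0 \<le> x e) \<and>
     (\<forall>i\<in>{1..k}. \<forall>j\<in>{1..k}. i \<noteq> j \<longrightarrow>
        (\<forall>p. dpath E p \<and> hd p = s i \<and> last p = s j \<longrightarrow> 1 \<le> path_len x p))"

text \<open>Vertices of G+ : Inl v for v in G, Inr i for the new vertex t_i.\<close>
definition plus_edges :: "('a \<times> 'a) set \<Rightarrow> (nat \<Rightarrow> 'a) \<Rightarrow> nat \<Rightarrow> (('a + nat) \<times> ('a + nat)) set" where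
  "plus_edges E s k = {(Inl u, Inl v) | u v. (u, v) \<in> E}
     \<union> {(Inr i, Inl (s j)) | i j. i \<in> {1..k} \<and> j \<in> {1..k} \<and> i \<noteq> j}"

definition plus_len :: "('a \<times> 'a \<Rightarrow> real) \<Rightarrow> ('a + nat) \<times> ('a + nat) \<Rightarrow> real" where
  "plus_len x e = (case e of (Inl u, Inl v) \<Rightarrow> x (u, v) | _ \<Rightarrow> 0)"

definition lift_edge :: "'a \<times> 'a \<Rightarrow> ('a + nat) \<times> ('a + nat)" where
  "lift_edge e = (Inl (fst e), Inl (snd e))"

definition dplus :: "('a \<times> 'a) set \<Rightarrow> (nat \<Rightarrow> 'a) \<Rightarrow> nat \<Rightarrow> ('a \<times> 'a \<Rightarrow> real) \<Rightarrow> 'a + nat \<Rightarrow> 'a + nat \<Rightarrow> ereal" where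
  "dplus E s k x = dist_in (plus_edges E s k) (plus_len x)"

definition ball_plus :: "('a \<times> 'a) set \<Rightarrow> (nat \<Rightarrow> 'a) \<Rightarrow> nat \<Rightarrow> ('a \<times> 'a \<Rightarrow> real) \<Rightarrow> 'a + nat \<Rightarrow> real \<Rightarrow> ('a + nat) set" where
  "ball_plus E s k x v r = {u. dplus E s k x v u \<le> ereal r}"

definition out_cut :: "('b \<times> 'b) set \<Rightarrow> 'b set \<Rightarrow> ('b \<times> 'b) set" where
  "out_cut F A = {(a, b) \<in> F. a \<in> A \<and> b \<notin> A}"

definition C_cut :: "('a \<times> 'a) set \<Rightarrow> (nat \<Rightarrow> 'a) \<Rightarrow> nat \<Rightarrow> ('a \<times> 'a \<Rightarrow> real) \<Rightarrow> real \<Rightarrow> (('a + nat) \<times> ('a + nat)) set" where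
  "C_cut E s k x \<theta> = (\<Union>i\<in>{1..k}. out_cut (plus_edges E s k) (ball_plus E s k x (Inr i) \<theta>))"

definition a1 :: "('a \<times> 'a) set \<Rightarrow> (nat \<Rightarrow> 'a) \<Rightarrow> nat \<Rightarrow> ('a \<times> 'a \<Rightarrow> real) \<Rightarrow> 'a \<Rightarrow> ereal" where
  "a1 E s k x u = sort (map (\<lambda>i. dist_in E x (s i) u) [1..<Suc k]) ! 0"

definition a2 :: "('a \<times> 'a) set \<Rightarrow> (nat \<Rightarrow> 'a) \<Rightarrow> nat \<Rightarrow> ('a \<times> 'a \<Rightarrow> real) \<Rightarrow> 'a \<Rightarrow> ereal" where
  "a2 E s k x u = sort (map (\<lambda>i. dist_in E x (s i) u) [1..<Suc k]) ! 1"

text \<open>Half-open interval [a, a + x_e) of reals (empty if a = +\<infinity>).\<close>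
definition hint :: "ereal \<Rightarrow> real \<Rightarrow> real set" where
  "hint a l = {\<theta>. a \<le> ereal \<theta> \<and> ereal \<theta> < a + ereal l}"

definition I1 :: "('a \<times> 'a) set \<Rightarrow> (nat \<Rightarrow> 'a) \<Rightarrow> nat \<Rightarrow> ('a \<times> 'a \<Rightarrow> real) \<Rightarrow> 'a \<times> 'a \<Rightarrow> real set" where
  "I1 E s k x e = hint (a1 E s k x (fst e)) (x e)"

definition I2 :: "('a \<times> 'a) set \<Rightarrow> (nat \<Rightarrow> 'a) \<Rightarrow> nat \<Rightarrow> ('a \<times> 'a \<Rightarrow> real) \<Rightarrow> 'a \<times> 'a \<Rightarrow> real set" where
  "I2 E s k x e = hint (a2 E s k x (fst e)) (x e)"

definition C' :: "('a \<times> 'a) set \<Rightarrow> (nat \<Rightarrow> 'a) \<Rightarrow> nat \<Rightarrow> ('a \<times> 'a \<Rightarrow> real) \<Rightarrow> real \<Rightarrow> ('a \<times> 'a) set" where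
  "C' E s k x \<theta> = {e \<in> E. \<theta> \<in> I1 E s k x e \<union> I2 E s k x e}"

end

theory Submission
  imports Defs "HOL-Probability.Probability_Measure"
begin

text \<open>
  For a terminal index j let \<phi>_j(u) be the minimum of d_G(s_l, u) over l \<noteq> j; this is the
  distance from t_j to u in G+. Along an edge e = (u,v) it grows by at most x_e, and as a
  minimum of all but one of the values d_G(s_l, u) it equals a_1(u) or a_2(u). Hence every
  edge of G leaving the ball B(t_j, \<theta>) has \<theta> \<in> [\<phi>_j(u), \<phi>_j(u) + x_e), a subset of
  I_1(e) \<union> I_2(e), while the edges (t_i, s_j) never leave a ball of positive radius; so
  C(\<theta>) \<subseteq> C'(\<theta>). On a path from s_i to s_j the function \<phi>_j is 0 at the start and, by
  feasibility of x, at least 1 at the end, so for \<theta> \<in> (0,1) some edge (u,v) of the path has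
  \<phi>_j(u) \<le> \<theta> < \<phi>_j(v) and lies in C'(\<theta>). Finally I_1(e) and I_2(e) are intervals of
  length x_e, so the union bound and linearity of expectation bound the expected weight.
\<close>

section \<open>Paths and distances\<close>

lemma path_len_conv_sum: "path_len x p = (\<Sum>i<length p - 1. x (p!i, p!Suc i))"
  unfolding path_len_def path_edges_def
  by (simp add: sum_list_sum_nth nth_tl atLeast0LessThan)

lemma path_len_snoc: "p \<noteq> [] \<Longrightarrow> path_len x (p @ [v]) = path_len x p + x (last p, v)"
proof -
  assume "p \<noteq> []"
  then have "path_edges (p @ [v]) = path_edges p @ [(last p, v)]"
    unfolding path_edges_def by (induction p rule: induct_list012) auto
  then show ?thesis by (simp add: path_len_def)
qed

lemma path_len_take_le:
  assumes "dpath E p" and "\<forall>e\<in>E. 0 \<le> x e"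
  shows "path_len x (take n p) \<le> path_len x p"
proof -
  have "path_len x (take n p) = (\<Sum>i<min n (length p) - 1. x (p!i, p!Suc i))"
    unfolding path_len_conv_sum by (intro sum.cong) auto
  also have "\<dots> \<le> path_len x p"
    unfolding path_len_conv_sum using assms unfolding dpath_def by (intro sum_mono2) auto
  finally show ?thesis .
qed

lemma dpath_take: "dpath E p \<Longrightarrow> dpath E (take (Suc n) p)"
  unfolding dpath_def by auto

lemma dpath_snoc:
  assumes p: "dpath E p" and edge: "(last p, v) \<in> E" and fresh: "v \<notin> set p"
  shows "dpath E (p @ [v])"
  unfolding dpath_def
proof (intro conjI allI impI)
  fix i assume i: "Suc i < length (p @ [v])"
  have "p \<noteq> []" using p unfolding dpath_def by simp
  show "((p @ [v]) ! i, (p @ [v]) ! Suc i) \<in> E"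
  proof (cases "Suc i < length p")
    case True
    then show ?thesis using p unfolding dpath_def by (auto simp: nth_append)
  next
    case False
    then have "i = length p - 1" using i by simp
    then show ?thesis using edge \<open>p \<noteq> []\<close> by (auto simp: nth_append last_conv_nth)
  qed
qed (use p fresh in \<open>auto simp: dpath_def\<close>)

text \<open>Paths must be simple, so if v already lies on p we cut p at v instead of appending v.\<close>
lemma dpath_extend_edge:
  assumes p: "dpath E p" "hd p = a" "last p = u" and uv: "(u, v) \<in> E"
    and nonneg: "\<forall>e\<in>E. 0 \<le> x e"
  obtains q where "dpath E q" "hd q = a" "last q = v" "path_len x q \<le> path_len x p + x (u, v)"
proof (cases "v \<in> set p")
  case True
  then obtain m where m: "m < length p" "p ! m = v" by (auto simp: in_set_conv_nth)
  have "p \<noteq> []" using p unfolding dpath_def by simp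
  show ?thesis
  proof (rule that)
    show "dpath E (take (Suc m) p)" using p(1) by (rule dpath_take)
    show "hd (take (Suc m) p) = a" using p(2) \<open>p \<noteq> []\<close> by (simp add: hd_take)
    show "last (take (Suc m) p) = v"
      using m by (subst last_conv_nth) (auto simp: min_def intro: arg_cong[where f="(!) p"])
    show "path_len x (take (Suc m) p) \<le> path_len x p + x (u, v)"
      using path_len_take_le[OF p(1) nonneg, of "Suc m"] nonneg uv by (simp add: add_increasing2)
  qed
next
  case False
  have "p \<noteq> []" using p unfolding dpath_def by simp
  then show ?thesis
    using that[of "p @ [v]"] dpath_snoc[of E p v] p uv False by (simp add: path_len_snoc)
qed

lemma dist_in_le_path_len:
  "dpath E p \<Longrightarrow> hd p = a \<Longrightarrow> last p = b \<Longrightarrow> dist_in E x a b \<le> ereal (path_len x p)"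
  unfolding dist_in_def by (rule Inf_lower) blast

lemma dist_in_greatest:
  "(\<And>p. dpath E p \<Longrightarrow> hd p = a \<Longrightarrow> last p = b \<Longrightarrow> c \<le> ereal (path_len x p))
    \<Longrightarrow> c \<le> dist_in E x a b"
  unfolding dist_in_def by (rule Inf_greatest) blast

lemma dist_in_self_le:
  assumes "0 \<le> c" shows "dist_in E x a a \<le> ereal c"
proof -
  have "dist_in E x a a \<le> ereal (path_len x [a])"
    by (rule dist_in_le_path_len) (auto simp: dpath_def)
  also have "\<dots> \<le> ereal c" using assms by (simp add: path_len_def path_edges_def)
  finally show ?thesis .
qed

lemma dist_in_edge_triangle:
  assumes uv: "(u, v) \<in> E" and nonneg: "\<forall>e\<in>E. 0 \<le> x e"
  shows "dist_in E x a v \<le> dist_in E x a u + ereal (x (u, v))"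
proof -
  have "dist_in E x a v - ereal (x (u, v)) \<le> dist_in E x a u"
  proof (rule dist_in_greatest)
    fix p assume "dpath E p" "hd p = a" "last p = u"
    then obtain q where q: "dpath E q" "hd q = a" "last q = v"
      and len: "path_len x q \<le> path_len x p + x (u, v)"
      using dpath_extend_edge uv nonneg by metis
    have "dist_in E x a v \<le> ereal (path_len x q)" using q by (rule dist_in_le_path_len)
    also have "\<dots> \<le> ereal (path_len x p) + ereal (x (u, v))" using len by simp
    finally show "dist_in E x a v - ereal (x (u, v)) \<le> ereal (path_len x p)"
      by (simp add: ereal_minus_le)
  qed
  then show ?thesis by (simp add: ereal_minus_le)
qed

section \<open>Distances in the auxiliary graph\<close>

lemma plus_edges_Inl_Inl_iff [simp]: "(Inl a, Inl b) \<in> plus_edges E s k \<longleftrightarrow> (a, b) \<in> E"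
  unfolding plus_edges_def by auto

lemma plus_edges_Inr_Inl_iff:
  "(Inr i, Inl b) \<in> plus_edges E s k \<longleftrightarrow> i \<in> {1..k} \<and> (\<exists>j\<in>{1..k}. j \<noteq> i \<and> b = s j)"
  unfolding plus_edges_def by auto

lemma Inr_notin_heads_plus_edges: "(a, Inr j) \<notin> plus_edges E s k"
  unfolding plus_edges_def by auto

lemma dpath_plus_lift:
  assumes q: "dpath E q" "hd q = s l" and l: "l \<in> {1..k}" "l \<noteq> i" and i: "i \<in> {1..k}"
  shows "dpath (plus_edges E s k) (Inr i # map Inl q)"
  unfolding dpath_def
proof (intro conjI allI impI)
  have "q \<noteq> []" using q unfolding dpath_def by simp
  show "distinct (Inr i # map Inl q)" using q unfolding dpath_def by (auto simp: distinct_map)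
  fix m assume m: "Suc m < length (Inr i # map Inl q)"
  show "((Inr i # map Inl q) ! m, (Inr i # map Inl q) ! Suc m) \<in> plus_edges E s k"
  proof (cases m)
    case 0
    have "q ! 0 = s l" using q(2) \<open>q \<noteq> []\<close> by (simp add: hd_conv_nth)
    then show ?thesis using 0 \<open>q \<noteq> []\<close> l i by (auto simp: plus_edges_Inr_Inl_iff)
  next
    case (Suc m')
    then show ?thesis using q m unfolding dpath_def by simp
  qed
qed simp

lemma path_len_plus_lift: "path_len (plus_len x) (Inr i # map Inl q) = path_len x q"
proof (cases q)
  case (Cons a q')
  have "path_edges (Inr i # map Inl q) = (Inr i, Inl a) # map lift_edge (path_edges q)"
    unfolding Cons path_edges_def lift_edge_def by (induction q' arbitrary: a) auto
  then show ?thesis by (simp add: path_len_def plus_len_def lift_edge_def comp_def)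
qed (simp add: path_len_def path_edges_def)

lemma dpath_plus_from_Inr:
  assumes P: "dpath (plus_edges E s k) P" "hd P = Inr i" "last P = Inl u"
  obtains l q where "l \<in> {1..k}" "l \<noteq> i" "dpath E q" "hd q = s l" "last q = u"
    "P = Inr i # map Inl q"
proof -
  obtain R where PR: "P = Inr i # R" using P(2) P(1) unfolding dpath_def by (cases P) auto
  have "R \<noteq> []" using P(3) PR by auto
  have R_Inl: "\<exists>v. R ! m = Inl v" if "m < length R" for m
  proof -
    have "(P ! m, R ! m) \<in> plus_edges E s k" using P(1) that PR unfolding dpath_def by auto
    then show ?thesis using Inr_notin_heads_plus_edges by (metis sum.exhaust)
  qed
  define q where "q = map projl R"
  have Rq: "R = map Inl q" unfolding q_def by (rule nth_equalityI) (auto dest!: R_Inl)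
  have "dpath E q" unfolding dpath_def
  proof (intro conjI allI impI)
    show "q \<noteq> []" using \<open>R \<noteq> []\<close> Rq by auto
    show "distinct q" using P(1) PR Rq unfolding dpath_def by (auto simp: distinct_map)
    fix m assume "Suc m < length q"
    then have "(P ! Suc m, P ! Suc (Suc m)) \<in> plus_edges E s k"
      using P(1) PR Rq unfolding dpath_def by auto
    then show "(q ! m, q ! Suc m) \<in> E" using PR Rq \<open>Suc m < length q\<close> by simp
  qed
  moreover have "last q = u" using P(3) PR Rq \<open>R \<noteq> []\<close> by (auto simp: last_map)
  moreover obtain l where "l \<in> {1..k}" "l \<noteq> i" "hd q = s l"
  proof -
    have "(P ! 0, P ! 1) \<in> plus_edges E s k" using P(1) PR \<open>R \<noteq> []\<close> unfolding dpath_def by auto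
    then have "(Inr i, Inl (hd q)) \<in> plus_edges E s k" using PR Rq \<open>R \<noteq> []\<close> by (auto simp: hd_conv_nth)
    then show ?thesis using that by (auto simp: plus_edges_Inr_Inl_iff)
  qed
  ultimately show ?thesis using that PR Rq by blast
qed

text \<open>No edge of G+ enters a vertex t_i.\<close>
lemma dplus_Inr_Inr:
  assumes "i \<noteq> j" shows "dplus E s k x (Inr i) (Inr j) = \<infinity>"
proof -
  have "\<not> dpath (plus_edges E s k) P" if P: "hd P = Inr i" "last P = Inr j" for P
  proof
    assume dp: "dpath (plus_edges E s k) P"
    then have "P \<noteq> []" unfolding dpath_def by simp
    have "length P \<noteq> 1"
    proof
      assume "length P = 1"
      then have "hd P = last P" by (cases P) auto
      then show False using P assms by simp
    qed
    then have "Suc (length P - 2) = length P - 1" "Suc (length P - 2) < length P"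
      using \<open>P \<noteq> []\<close> by (cases P; simp)+
    then have "(P ! (length P - 2), P ! (length P - 1)) \<in> plus_edges E s k"
      using dp unfolding dpath_def by metis
    then show False using P(2) \<open>P \<noteq> []\<close> Inr_notin_heads_plus_edges by (metis last_conv_nth)
  qed
  then have no_paths: "{ereal (path_len (plus_len x) p) |p.
      dpath (plus_edges E s k) p \<and> hd p = Inr i \<and> last p = Inr j} = {}" by blast
  show ?thesis
    unfolding dplus_def dist_in_def by (simp only: no_paths Inf_empty) (simp add: top_ereal_def)
qed

section \<open>The distance from all other terminals\<close>

definition dist_others ::
    "('a \<times> 'a) set \<Rightarrow> (nat \<Rightarrow> 'a) \<Rightarrow> nat \<Rightarrow> ('a \<times> 'a \<Rightarrow> real) \<Rightarrow> nat \<Rightarrow> 'a \<Rightarrow> ereal" where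
  "dist_others E s k x j u = Min ((\<lambda>l. dist_in E x (s l) u) ` ({1..k} - {j}))"

lemma dist_others_le: "l \<in> {1..k} \<Longrightarrow> l \<noteq> j \<Longrightarrow> dist_others E s k x j u \<le> dist_in E x (s l) u"
  unfolding dist_others_def by (intro Min_le) auto

lemma dist_others_attained:
  assumes "k \<ge> 2"
  obtains l where "l \<in> {1..k}" "l \<noteq> j" "dist_others E s k x j u = dist_in E x (s l) u"
proof -
  have "1 \<in> {1..k} - {j} \<or> 2 \<in> {1..k} - {j}" using assms by auto
  then have "{1..k} - {j} \<noteq> {}" by blast
  then have "dist_others E s k x j u \<in> (\<lambda>l. dist_in E x (s l) u) ` ({1..k} - {j})"
    unfolding dist_others_def by (intro Min_in) auto
  then obtain l where "l \<in> {1..k} - {j}" "dist_others E s k x j u = dist_in E x (s l) u" by blast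
  then show ?thesis using that by blast
qed

lemma dist_others_ge:
  assumes "k \<ge> 2" and "\<And>l. l \<in> {1..k} \<Longrightarrow> l \<noteq> j \<Longrightarrow> c \<le> dist_in E x (s l) u"
  shows "c \<le> dist_others E s k x j u"
  using assms by (metis dist_others_attained)

lemma dplus_Inr_Inl:
  assumes "k \<ge> 2" and i: "i \<in> {1..k}"
  shows "dplus E s k x (Inr i) (Inl u) = dist_others E s k x i u"
proof (rule antisym)
  obtain l where l: "l \<in> {1..k}" "l \<noteq> i" "dist_others E s k x i u = dist_in E x (s l) u"
    using dist_others_attained[OF assms(1)] .
  show "dplus E s k x (Inr i) (Inl u) \<le> dist_others E s k x i u"
    unfolding l(3)
  proof (rule dist_in_greatest)
    fix q assume q: "dpath E q" "hd q = s l" "last q = u"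
    then have "last (Inr i # map Inl q) = Inl u" unfolding dpath_def by (simp add: last_map)
    then have "dplus E s k x (Inr i) (Inl u) \<le> ereal (path_len (plus_len x) (Inr i # map Inl q))"
      unfolding dplus_def using dpath_plus_lift[where s=s and l=l, OF q(1,2) l(1,2) i]
      by (intro dist_in_le_path_len) simp_all
    then show "dplus E s k x (Inr i) (Inl u) \<le> ereal (path_len x q)"
      by (simp add: path_len_plus_lift)
  qed
  show "dist_others E s k x i u \<le> dplus E s k x (Inr i) (Inl u)"
    unfolding dplus_def
  proof (rule dist_in_greatest)
    fix P assume "dpath (plus_edges E s k) P" "hd P = Inr i" "last P = Inl u"
    then obtain l q where lq: "l \<in> {1..k}" "l \<noteq> i" "dpath E q" "hd q = s l" "last q = u"
      and P: "P = Inr i # map Inl q"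
      by (rule dpath_plus_from_Inr)
    have "dist_others E s k x i u \<le> dist_in E x (s l) u" using lq(1,2) by (rule dist_others_le)
    also have "\<dots> \<le> ereal (path_len x q)" using lq(3-5) by (rule dist_in_le_path_len)
    finally show "dist_others E s k x i u \<le> ereal (path_len (plus_len x) P)"
      by (simp add: P path_len_plus_lift)
  qed
qed

lemma dist_others_edge_le:
  assumes "k \<ge> 2" and "(u, v) \<in> E" and "\<forall>e\<in>E. 0 \<le> x e"
  shows "dist_others E s k x j v \<le> dist_others E s k x j u + ereal (x (u, v))"
proof -
  obtain l where l: "l \<in> {1..k}" "l \<noteq> j" "dist_others E s k x j u = dist_in E x (s l) u"
    using dist_others_attained[OF assms(1)] .
  have "dist_others E s k x j v \<le> dist_in E x (s l) v" using l(1,2) by (rule dist_others_le)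
  also have "\<dots> \<le> dist_in E x (s l) u + ereal (x (u, v))"
    using assms(2,3) by (rule dist_in_edge_triangle)
  finally show ?thesis using l(3) by simp
qed

lemma Min_image_remove_eq_sort_nth:
  fixes D :: "nat \<Rightarrow> 'b::linorder"
  assumes j: "j \<in> {1..k}" and k: "k \<ge> 2"
  shows "Min (D ` ({1..k} - {j})) = sort (map D [1..<Suc k]) ! 0
       \<or> Min (D ` ({1..k} - {j})) = sort (map D [1..<Suc k]) ! 1"
proof -
  obtain L1 L2 where split: "[1..<Suc k] = L1 @ j # L2"
    using j by (metis atLeastLessThanSuc_atLeastAtMost set_upt split_list)
  have "distinct (L1 @ j # L2)" using split by (metis distinct_upt)
  moreover have "set (L1 @ j # L2) = {1..k}" using split by (metis atLeastLessThanSuc_atLeastAtMost set_upt)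
  ultimately have rest: "D ` ({1..k} - {j}) = set (map D (L1 @ L2))" by auto
  define ys where "ys = sort (map D [1..<Suc k])"
  have mset_ys: "mset ys = add_mset (D j) (mset (map D (L1 @ L2)))"
    unfolding ys_def split by simp
  have "length ys = k" unfolding ys_def by simp
  then obtain y0 y1 zs where ys: "ys = y0 # y1 # zs" using k
    by (cases ys; cases "tl ys") auto
  have "sorted ys" unfolding ys_def by simp
  then have y0_le: "\<forall>z\<in>set (y1 # zs). y0 \<le> z" and y1_le: "\<forall>z\<in>set zs. y1 \<le> z" using ys by auto
  show ?thesis
  proof (cases "D j = y0")
    case True
    then have "mset (map D (L1 @ L2)) = mset (y1 # zs)" using mset_ys ys by simp
    then have "set (map D (L1 @ L2)) = set (y1 # zs)" by (metis set_mset_mset)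
    then have "Min (D ` ({1..k} - {j})) = y1" unfolding rest using y1_le by (intro Min_eqI) auto
    then show ?thesis using ys ys_def by auto
  next
    case False
    have "y0 \<in># mset ys" using ys by simp
    then have "y0 \<in> set (map D (L1 @ L2))" using mset_ys False by simp
    moreover have "\<forall>z\<in>set (map D (L1 @ L2)). z \<in># mset ys" using mset_ys by auto
    then have "\<forall>z\<in>set (map D (L1 @ L2)). y0 \<le> z" using ys y0_le by auto
    ultimately have "Min (D ` ({1..k} - {j})) = y0" unfolding rest by (intro Min_eqI) auto
    then show ?thesis using ys ys_def by auto
  qed
qed

lemma dist_others_eq_a1_or_a2:
  "j \<in> {1..k} \<Longrightarrow> k \<ge> 2
    \<Longrightarrow> dist_others E s k x j u = a1 E s k x u \<or> dist_others E s k x j u = a2 E s k x u"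
  unfolding dist_others_def a1_def a2_def by (rule Min_image_remove_eq_sort_nth)

lemma mem_C'_if_crossing:
  assumes "k \<ge> 2" and j: "j \<in> {1..k}" and uv: "(u, v) \<in> E" and nonneg: "\<forall>e\<in>E. 0 \<le> x e"
    and "dist_others E s k x j u \<le> ereal \<theta>" and "ereal \<theta> < dist_others E s k x j v"
  shows "(u, v) \<in> C' E s k x \<theta>"
proof -
  have "\<theta> \<in> hint (dist_others E s k x j u) (x (u, v))"
    unfolding hint_def using assms dist_others_edge_le[OF assms(1) uv nonneg, of s j] by auto
  then show ?thesis
    using dist_others_eq_a1_or_a2[OF j assms(1), of E s x u] uv
    unfolding C'_def I1_def I2_def by auto
qed

lemma C'_subset: "C' E s k x \<theta> \<subseteq> E"
  unfolding C'_def by auto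

lemma C_cut_subset_C':
  assumes k: "k \<ge> 2" and nonneg: "\<forall>e\<in>E. 0 \<le> x e" and "0 < \<theta>"
  shows "C_cut E s k x \<theta> \<subseteq> lift_edge ` C' E s k x \<theta>"
proof
  fix e assume "e \<in> C_cut E s k x \<theta>"
  then obtain i a b where i: "i \<in> {1..k}" and e: "e = (a, b)" "e \<in> plus_edges E s k"
    and a_in: "dplus E s k x (Inr i) a \<le> ereal \<theta>" and b_out: "\<not> dplus E s k x (Inr i) b \<le> ereal \<theta>"
    unfolding C_cut_def out_cut_def ball_plus_def by auto
  from e consider (graph) u v where "a = Inl u" "b = Inl v" "(u, v) \<in> E"
    | (terminal) i' j where "a = Inr i'" "b = Inl (s j)" "i' \<in> {1..k}" "j \<in> {1..k}" "i' \<noteq> j"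
    unfolding plus_edges_def by blast
  then show "e \<in> lift_edge ` C' E s k x \<theta>"
  proof cases
    case graph
    have "dist_others E s k x i u \<le> ereal \<theta>"
      using a_in graph(1) by (simp add: dplus_Inr_Inl[OF k i])
    moreover have "ereal \<theta> < dist_others E s k x i v"
      using b_out graph(2) by (simp add: dplus_Inr_Inl[OF k i] not_le)
    ultimately have "(u, v) \<in> C' E s k x \<theta>" by (rule mem_C'_if_crossing[OF k i graph(3) nonneg])
    moreover have "e = lift_edge (u, v)" using e(1) graph(1,2) by (simp add: lift_edge_def)
    ultimately show ?thesis by simp
  next
    case terminal
    have "i' = i"
    proof (rule ccontr)
      assume "i' \<noteq> i"
      then have "dplus E s k x (Inr i) a = \<infinity>" using terminal(1) dplus_Inr_Inr[of i i'] by simp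
      with a_in show False by simp
    qed
    have "dplus E s k x (Inr i) b = dist_others E s k x i (s j)"
      using terminal(2) by (simp add: dplus_Inr_Inl[OF k i])
    also have "\<dots> \<le> dist_in E x (s j) (s j)"
      using terminal(4,5) \<open>i' = i\<close> by (intro dist_others_le) auto
    also have "\<dots> \<le> ereal \<theta>" using \<open>0 < \<theta>\<close> by (intro dist_in_self_le) simp
    finally show ?thesis using b_out by simp
  qed
qed

lemma dist_others_terminal_ge_one:
  assumes "k \<ge> 2" and "dir_mc_rel_feasible E s k x" and "j \<in> {1..k}"
  shows "1 \<le> dist_others E s k x j (s j)"
  by (intro dist_others_ge dist_in_greatest) (use assms in \<open>auto simp: dir_mc_rel_feasible_def\<close>)

lemma exists_crossing_step:
  "P 0 \<Longrightarrow> \<not> P n \<Longrightarrow> \<exists>m<n. P m \<and> \<not> P (Suc m)"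
  by (induction n) (auto simp: less_Suc_eq)

lemma dir_multiway_cut_C':
  assumes k: "k \<ge> 2" and feasible: "dir_mc_rel_feasible E s k x" and \<theta>: "0 < \<theta>" "\<theta> < 1"
  shows "dir_multiway_cut E s k (C' E s k x \<theta>)"
  unfolding dir_multiway_cut_def
proof (intro conjI ballI impI notI)
  show "C' E s k x \<theta> \<subseteq> E" by (rule C'_subset)
  have nonneg: "\<forall>e\<in>E. 0 \<le> x e" using feasible unfolding dir_mc_rel_feasible_def by blast
  fix i j assume i: "i \<in> {1..k}" and j: "j \<in> {1..k}" and "i \<noteq> j"
  assume "\<exists>p. dpath (E - C' E s k x \<theta>) p \<and> hd p = s i \<and> last p = s j"
  then obtain p where p: "dpath (E - C' E s k x \<theta>) p" "hd p = s i" "last p = s j" by blast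
  have "p \<noteq> []" using p unfolding dpath_def by simp
  define \<phi> where "\<phi> m = dist_others E s k x j (p ! m)" for m
  have "\<phi> 0 \<le> dist_in E x (s i) (s i)"
    unfolding \<phi>_def using p(2) \<open>p \<noteq> []\<close> i \<open>i \<noteq> j\<close> by (simp add: hd_conv_nth[symmetric] dist_others_le)
  also have "\<dots> \<le> ereal \<theta>" using \<theta>(1) by (intro dist_in_self_le) simp
  finally have start: "\<phi> 0 \<le> ereal \<theta>" .
  have "\<phi> (length p - 1) = dist_others E s k x j (s j)"
    unfolding \<phi>_def using p(3) \<open>p \<noteq> []\<close> by (simp add: last_conv_nth)
  then have "1 \<le> \<phi> (length p - 1)" using dist_others_terminal_ge_one[OF k feasible j] by simp
  moreover have "ereal \<theta> < 1" using \<theta>(2) by simp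
  ultimately have finish: "\<not> \<phi> (length p - 1) \<le> ereal \<theta>" by (meson less_le_trans not_le)
  obtain m where m: "m < length p - 1" "\<phi> m \<le> ereal \<theta>" "\<not> \<phi> (Suc m) \<le> ereal \<theta>"
    using exists_crossing_step[of "\<lambda>m. \<phi> m \<le> ereal \<theta>", OF start finish] by blast
  have edge: "(p ! m, p ! Suc m) \<in> E - C' E s k x \<theta>"
    using p(1) m(1) unfolding dpath_def by simp
  moreover have "(p ! m, p ! Suc m) \<in> C' E s k x \<theta>"
  proof (rule mem_C'_if_crossing[OF k j _ nonneg])
    show "(p ! m, p ! Suc m) \<in> E" using edge by simp
  qed (use m(2,3) in \<open>simp_all add: \<phi>_def not_le\<close>)
  ultimately show False by simp
qed

section \<open>The probability bound\<close>

lemma hint_eq_empty_or_atLeastLessThan: "hint a l = {} \<or> (\<exists>r. hint a l = {r..<r + l})"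
  by (cases a) (auto simp: hint_def)

lemma hint_in_sets_borel [simp]: "hint a l \<in> sets borel"
  using hint_eq_empty_or_atLeastLessThan[of a l] by auto

lemma measure_lborel_Int_hint_le:
  assumes "A \<in> sets lborel" and "0 \<le> l"
  shows "measure lborel (A \<inter> hint a l) \<le> l"
  using hint_eq_empty_or_atLeastLessThan[of a l]
proof
  assume "\<exists>r. hint a l = {r..<r + l}"
  then obtain r where r: "hint a l = {r..<r + l}" by blast
  have "measure lborel (A \<inter> hint a l) \<le> measure lborel {r..<r + l}"
    unfolding r using assms by (intro measure_mono_fmeasurable) (auto simp: fmeasurable_def)
  then show ?thesis using assms(2) by simp
qed (use assms in simp)

lemma measure_uniform_01_hint_le:
  "0 \<le> l \<Longrightarrow> measure (uniform_measure lborel {0<..<1}) (hint a l) \<le> l"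
  by (subst measure_uniform_measure) (simp_all add: measure_lborel_Int_hint_le)

lemma C'_mem_set_eq: "e \<in> E \<Longrightarrow> {\<theta>. e \<in> C' E s k x \<theta>} = I1 E s k x e \<union> I2 E s k x e"
  unfolding C'_def by auto

lemma C'_mem_set_in_sets_borel: "{\<theta>. e \<in> C' E s k x \<theta>} \<in> sets borel"
proof (cases "e \<in> E")
  case True
  then show ?thesis unfolding C'_mem_set_eq[OF True] I1_def I2_def by (intro sets.Un) simp_all
qed (simp add: C'_def)

lemma measure_C'_le:
  assumes "e \<in> E" and "0 \<le> x e"
  shows "measure (uniform_measure lborel {0<..<1}) {\<theta>. e \<in> C' E s k x \<theta>} \<le> 2 * x e"
proof -
  let ?U = "uniform_measure lborel {0<..<1::real}"
  have "{\<theta>. e \<in> C' E s k x \<theta>} = I1 E s k x e \<union> I2 E s k x e"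
    using assms(1) by (rule C'_mem_set_eq)
  also have "measure ?U \<dots> \<le> measure ?U (I1 E s k x e) + measure ?U (I2 E s k x e)"
    unfolding I1_def I2_def by (intro measure_Un_le) simp_all
  also have "\<dots> \<le> x e + x e"
    unfolding I1_def I2_def using assms(2) by (intro add_mono measure_uniform_01_hint_le)
  finally show ?thesis by simp
qed

lemma
  fixes w :: "'b \<Rightarrow> real" and S :: "'a \<Rightarrow> 'b set"
  assumes "finite_measure M" and "finite E" and "\<And>\<theta>. S \<theta> \<subseteq> E"
    and "\<And>e. e \<in> E \<Longrightarrow> {\<theta>. e \<in> S \<theta>} \<in> sets M"
  shows integrable_sum_random_subset: "integrable M (\<lambda>\<theta>. sum w (S \<theta>))"
    and integral_sum_random_subset:
      "(\<integral>\<theta>. sum w (S \<theta>) \<partial>M) = (\<Sum>e\<in>E. w e * measure M {\<theta>. e \<in> S \<theta>})"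
proof -
  have sum_eq: "(\<lambda>\<theta>. sum w (S \<theta>)) = (\<lambda>\<theta>. \<Sum>e\<in>E. w e * indicator {\<theta>. e \<in> S \<theta>} \<theta>)"
  proof
    fix \<theta>
    have "sum w (S \<theta>) = sum w (E \<inter> S \<theta>)" using assms(3) by (metis inf.absorb2)
    also have "\<dots> = (\<Sum>e\<in>E. w e * indicator {\<theta>. e \<in> S \<theta>} \<theta>)"
      using assms(2) by (simp add: sum.inter_restrict indicator_def if_distrib)
    finally show "sum w (S \<theta>) = (\<Sum>e\<in>E. w e * indicator {\<theta>. e \<in> S \<theta>} \<theta>)" .
  qed
  have integrable_indicator: "integrable M (indicator {\<theta>. e \<in> S \<theta>} :: 'a \<Rightarrow> real)"
    if "e \<in> E" for e
    using assms(4)[OF that] finite_measure.emeasure_finite[OF assms(1)] by (auto simp: less_top)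
  then have integrable_term: "integrable M (\<lambda>\<theta>. w e * indicator {\<theta>. e \<in> S \<theta>} \<theta>)"
    if "e \<in> E" for e
    using that by (intro integrable_mult_right)
  show "integrable M (\<lambda>\<theta>. sum w (S \<theta>))"
    unfolding sum_eq by (intro Bochner_Integration.integrable_sum integrable_term)
  show "(\<integral>\<theta>. sum w (S \<theta>) \<partial>M) = (\<Sum>e\<in>E. w e * measure M {\<theta>. e \<in> S \<theta>})"
    unfolding sum_eq using assms(4)
    by (subst Bochner_Integration.integral_sum)
      (auto intro: integrable_term sum.cong simp: integrable_indicator sets.Int_space_eq2)
qed

theorem mainTheorem5:
  fixes V :: "'a set" and E :: "('a \<times> 'a) set" and w x :: "'a \<times> 'a \<Rightarrow> real"
    and s :: "nat \<Rightarrow> 'a" and k :: nat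
  assumes "finite V" and "E \<subseteq> V \<times> V"
    and "\<forall>e\<in>E. 0 \<le> w e"
    and "k \<ge> 2" and "inj_on s {1..k}" and "s ` {1..k} \<subseteq> V"
    and "dir_mc_rel_feasible E s k x"
  shows "(\<forall>\<theta>\<in>{0<..<1}. C_cut E s k x \<theta> \<subseteq> lift_edge ` C' E s k x \<theta>
                        \<and> dir_multiway_cut E s k (C' E s k x \<theta>))
    \<and> (\<forall>e\<in>E. {\<theta>. e \<in> C' E s k x \<theta>} \<in> sets lborel
            \<and> measure (uniform_measure lborel {0<..<1}) {\<theta>. e \<in> C' E s k x \<theta>} \<le> 2 * x e)
    \<and> integrable (uniform_measure lborel {0<..<1::real}) (\<lambda>\<theta>. sum w (C' E s k x \<theta>))
    \<and> (\<integral>\<theta>. sum w (C' E s k x \<theta>) \<partial>uniform_measure lborel {0<..<1::real})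
         \<le> 2 * (\<Sum>e\<in>E. w e * x e)"
proof -
  let ?U = "uniform_measure lborel {0<..<1::real}"
  have nonneg: "\<forall>e\<in>E. 0 \<le> x e" using assms(7) unfolding dir_mc_rel_feasible_def by blast
  have "finite E" using assms(1,2) by (meson finite_SigmaI finite_subset)
  have "finite_measure ?U" using prob_space_uniform_measure[of lborel "{0<..<1::real}"]
    by (simp add: prob_space_def)
  have "{\<theta>. e \<in> C' E s k x \<theta>} \<in> sets ?U" for e by (simp add: C'_mem_set_in_sets_borel)
  note random_subset = \<open>finite_measure ?U\<close> \<open>finite E\<close> C'_subset this
  have cuts: "\<forall>\<theta>\<in>{0<..<1}. C_cut E s k x \<theta> \<subseteq> lift_edge ` C' E s k x \<theta>
      \<and> dir_multiway_cut E s k (C' E s k x \<theta>)"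
    using C_cut_subset_C'[OF assms(4) nonneg] dir_multiway_cut_C'[OF assms(4,7)] by simp
  have probs: "\<forall>e\<in>E. measure ?U {\<theta>. e \<in> C' E s k x \<theta>} \<le> 2 * x e"
    using measure_C'_le nonneg by blast
  have "(\<integral>\<theta>. sum w (C' E s k x \<theta>) \<partial>?U) = (\<Sum>e\<in>E. w e * measure ?U {\<theta>. e \<in> C' E s k x \<theta>})"
    by (rule integral_sum_random_subset[OF random_subset])
  also have "\<dots> \<le> (\<Sum>e\<in>E. w e * (2 * x e))"
    using probs assms(3) by (intro sum_mono mult_left_mono) auto
  also have "\<dots> = 2 * (\<Sum>e\<in>E. w e * x e)" by (simp add: sum_distrib_left algebra_simps)
  finally show ?thesis
    using cuts probs integrable_sum_random_subset[OF random_subset]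
    by (simp add: C'_mem_set_in_sets_borel)
qed

end
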